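(* Let $\mathcal{O}(\mathbb{D})$ be the vector space of all analytic functions on the open unit disk $\mathbb{D}$. For $f\in\mathcal{O}(\mathbb{D})$ define $$(Cf)(z)=\frac{1}{z}\int_0^z\frac{f(\xi)}{1-\xi}\,d\xi,\quad z\in\mathbb{D},$$ where the integral is along any path from $0$ to $z$ in $\mathbb{D}$ (with the value at $z=0$ understood by continuity, so that $Cf\in\mathcal{O}(\mathbb{D})$). Then the map $f\mapsto Cf$ is a linear isomorphism of $\mathcal{O}(\mathbb{D})$ onto itself. *)

theory Defs
  imports "HOL-Complex_Analysis.Complex_Analysis"
begin

text \<open>Analytic functions on the open unit disk, represented extensionally:
  holomorphic on ball 0 1 and equal to 0 outside the disk (so each function
  on the disk has exactly one representative).\<close>
definition OD :: "(complex \<Rightarrow> complex) set" where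
  "OD = {f. f holomorphic_on ball 0 1 \<and> (\<forall>z. z \<notin> ball 0 1 \<longrightarrow> f z = 0)}"

definition Craw :: "(complex \<Rightarrow> complex) \<Rightarrow> complex \<Rightarrow> complex" where
  "Craw f z = (1 / z) * contour_integral (linepath 0 z) (\<lambda>\<xi>. f \<xi> / (1 - \<xi>))"

definition Cop :: "(complex \<Rightarrow> complex) \<Rightarrow> complex \<Rightarrow> complex" where
  "Cop f z = (if z \<in> ball 0 1 then
                (if z = 0 then Lim (at 0) (Craw f) else Craw f z)
              else 0)"

end

theory Submission
  imports Defs
begin

text \<open>If G is a primitive of f/(1 - z) on the disk, integrating along the segment gives
  z (C f)(z) = G z - G 0: so C f is the difference quotient of G at 0, which extends
  holomorphically across 0 with value G'(0) = f(0). Hence z (C f) is the primitive of f/(1 - z)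
  vanishing at 0, and f = (1 - z) (z C f)'. Conversely, for analytic g the function z g is the
  primitive of h/(1 - z) vanishing at 0, where h = (1 - z) (z g)', so C h = g. Thus
  g \<mapsto> (1 - z) (z g)' is a two-sided inverse of C, and linearity of C is inherited from
  linearity of primitives.\<close>

definition disk_primitive :: "(complex \<Rightarrow> complex) \<Rightarrow> (complex \<Rightarrow> complex) \<Rightarrow> bool" where
  "disk_primitive G h \<longleftrightarrow> (\<forall>x\<in>ball 0 1. (G has_field_derivative h x) (at x))"

lemma disk_primitiveD:
  "disk_primitive G h \<Longrightarrow> x \<in> ball 0 1 \<Longrightarrow> (G has_field_derivative h x) (at x)"
  by (simp add: disk_primitive_def)

lemma disk_primitive_exists:
  assumes "h holomorphic_on ball 0 1"
  obtains G where "disk_primitive G h"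
proof -
  obtain G where "\<And>x. x \<in> ball 0 1 \<Longrightarrow> (G has_field_derivative h x) (at x within ball 0 1)"
    using holomorphic_convex_primitive'[OF convex_ball open_ball assms] by blast
  then show thesis
    using that at_within_open[OF _ open_ball] by (metis disk_primitive_def)
qed

lemma disk_primitive_div_one_minus_exists:
  assumes "f holomorphic_on ball 0 1"
  obtains G where "disk_primitive G (\<lambda>x. f x / (1 - x))"
proof (rule disk_primitive_exists)
  show "(\<lambda>x. f x / (1 - x)) holomorphic_on ball 0 1"
    using assms by (intro holomorphic_intros) (auto simp: dist_norm)
qed

lemma Cop_eq_difference_quotient:
  assumes G: "disk_primitive G (\<lambda>x. f x / (1 - x))"
  shows "Cop f z = (if z \<in> ball 0 1 then if z = 0 then f 0 else (G z - G 0) / z else 0)"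
proof -
  have Craw_eq: "Craw f w = (G w - G 0) / w" if w: "w \<in> ball 0 1" for w
  proof -
    have "((\<lambda>\<xi>. f \<xi> / (1 - \<xi>)) has_contour_integral
             G (pathfinish (linepath 0 w)) - G (pathstart (linepath 0 w))) (linepath 0 w)"
    proof (rule contour_integral_primitive[where S = "ball 0 1"])
      show "path_image (linepath 0 w) \<subseteq> ball 0 1"
        using w by (simp add: closed_segment_subset)
      show "(G has_field_derivative f x / (1 - x)) (at x within ball 0 1)" if "x \<in> ball 0 1" for x
        using disk_primitiveD[OF G that] by (rule has_field_derivative_at_within)
    qed (rule valid_path_linepath)
    then show ?thesis
      by (simp add: Craw_def contour_integral_unique)
  qed
  have "\<forall>\<^sub>F w in at 0. w \<in> ball (0::complex) 1"
    by (rule eventually_at_in_open') auto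
  then have "\<forall>\<^sub>F w in at 0. (G w - G 0) / (w - 0) = Craw f w"
    by eventually_elim (simp add: Craw_eq)
  moreover have "(G has_field_derivative f 0) (at 0)"
    using disk_primitiveD[OF G, of 0] by simp
  ultimately have "(Craw f \<longlongrightarrow> f 0) (at 0)"
    by (auto simp: has_field_derivative_iff intro: Lim_transform_eventually)
  then have "Lim (at 0) (Craw f) = f 0"
    by (simp add: tendsto_Lim)
  then show ?thesis
    by (simp add: Cop_def Craw_eq)
qed

lemma mult_Cop_eq_primitive_diff:
  assumes G: "disk_primitive G (\<lambda>x. f x / (1 - x))" and z: "z \<in> ball 0 1"
  shows "z * Cop f z = G z - G 0"
  using z by (cases "z = 0") (simp_all add: Cop_eq_difference_quotient[OF G])

lemma Cop_add:
  assumes "f holomorphic_on ball 0 1" and "g holomorphic_on ball 0 1"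
  shows "Cop (\<lambda>z. f z + g z) = (\<lambda>z. Cop f z + Cop g z)"
proof -
  obtain F where F: "disk_primitive F (\<lambda>x. f x / (1 - x))"
    using disk_primitive_div_one_minus_exists assms(1) by blast
  obtain G where G: "disk_primitive G (\<lambda>x. g x / (1 - x))"
    using disk_primitive_div_one_minus_exists assms(2) by blast
  have "disk_primitive (\<lambda>z. F z + G z) (\<lambda>x. (f x + g x) / (1 - x))"
    using F G by (auto simp: disk_primitive_def add_divide_distrib intro: DERIV_add)
  then show ?thesis
    by (simp add: fun_eq_iff Cop_eq_difference_quotient[OF F] Cop_eq_difference_quotient[OF G]
        Cop_eq_difference_quotient diff_divide_distrib add_divide_distrib)
qed

lemma Cop_cmult:
  assumes "f holomorphic_on ball 0 1"
  shows "Cop (\<lambda>z. c * f z) = (\<lambda>z. c * Cop f z)"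
proof -
  obtain F where F: "disk_primitive F (\<lambda>x. f x / (1 - x))"
    using disk_primitive_div_one_minus_exists assms by blast
  have "disk_primitive (\<lambda>z. c * F z) (\<lambda>x. c * f x / (1 - x))"
    using F DERIV_cmult by (fastforce simp: disk_primitive_def)
  then show ?thesis
    by (simp add: fun_eq_iff Cop_eq_difference_quotient[OF F] Cop_eq_difference_quotient
        right_diff_distrib)
qed

lemma Cop_holomorphic:
  assumes "f holomorphic_on ball 0 1"
  shows "Cop f holomorphic_on ball 0 1"
proof -
  obtain G where G: "disk_primitive G (\<lambda>x. f x / (1 - x))"
    using disk_primitive_div_one_minus_exists assms by blast
  then have "G holomorphic_on ball 0 1"
    by (metis disk_primitive_def holomorphic_on_def field_differentiable_def
        field_differentiable_at_within)
  then have "(\<lambda>z. if z = 0 then deriv G 0 else (G z - G 0) / (z - 0)) holomorphic_on ball 0 1"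
    by (rule pole_lemma_open) simp
  moreover have "deriv G 0 = f 0"
    using disk_primitiveD[OF G, of 0] DERIV_imp_deriv by simp
  ultimately have "(\<lambda>z. if z = 0 then f 0 else (G z - G 0) / z) holomorphic_on ball 0 1"
    by (simp only: diff_zero)
  then show ?thesis
    by (rule holomorphic_transform) (simp add: Cop_eq_difference_quotient[OF G])
qed

lemma Cop_OD: "f \<in> OD \<Longrightarrow> Cop f \<in> OD"
  using Cop_holomorphic by (simp add: OD_def Cop_def)

lemma has_field_derivative_mult_Cop:
  assumes "f holomorphic_on ball 0 1" and z: "z \<in> ball 0 1"
  shows "((\<lambda>w. w * Cop f w) has_field_derivative f z / (1 - z)) (at z)"
proof -
  obtain G where G: "disk_primitive G (\<lambda>x. f x / (1 - x))"
    using disk_primitive_div_one_minus_exists assms(1) by blast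
  have "((\<lambda>w. G w - G 0) has_field_derivative f z / (1 - z)) (at z)"
    using DERIV_diff[OF disk_primitiveD[OF G z] DERIV_const] by simp
  then show ?thesis
    by (rule has_field_derivative_transform_within_open[OF _ open_ball z])
       (simp add: mult_Cop_eq_primitive_diff[OF G])
qed

definition Cop_inverse :: "(complex \<Rightarrow> complex) \<Rightarrow> complex \<Rightarrow> complex" where
  "Cop_inverse g z = (if z \<in> ball 0 1 then (1 - z) * deriv (\<lambda>w. w * g w) z else 0)"

lemma Cop_inverse_OD:
  assumes "g \<in> OD"
  shows "Cop_inverse g \<in> OD"
proof -
  have "g holomorphic_on ball 0 1"
    using assms by (simp add: OD_def)
  then have "(\<lambda>z. (1 - z) * deriv (\<lambda>w. w * g w) z) holomorphic_on ball 0 1"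
    by (intro holomorphic_intros holomorphic_deriv) auto
  then have "Cop_inverse g holomorphic_on ball 0 1"
    by (rule holomorphic_transform) (simp add: Cop_inverse_def)
  then show ?thesis
    by (simp add: OD_def Cop_inverse_def)
qed

lemma Cop_inverse_Cop:
  assumes "f \<in> OD"
  shows "Cop_inverse (Cop f) = f"
proof
  fix z
  show "Cop_inverse (Cop f) z = f z"
  proof (cases "z \<in> ball 0 1")
    case True
    then have "1 - z \<noteq> 0"
      by (auto simp: dist_norm)
    moreover have "deriv (\<lambda>w. w * Cop f w) z = f z / (1 - z)"
      using assms True by (intro DERIV_imp_deriv has_field_derivative_mult_Cop) (simp add: OD_def)
    ultimately show ?thesis
      using True by (simp add: Cop_inverse_def)
  next
    case False
    then show ?thesis
      using assms by (simp add: Cop_inverse_def OD_def)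
  qed
qed

lemma Cop_Cop_inverse:
  assumes "g \<in> OD"
  shows "Cop (Cop_inverse g) = g"
proof -
  have g: "g holomorphic_on ball 0 1"
    using assms by (simp add: OD_def)
  have zg: "((\<lambda>w. w * g w) has_field_derivative g x + x * deriv g x) (at x)"
    if "x \<in> ball 0 1" for x
    using DERIV_mult[OF DERIV_ident holomorphic_derivI[OF g open_ball that]]
    by (simp add: mult.commute)
  have "disk_primitive (\<lambda>w. w * g w) (\<lambda>x. Cop_inverse g x / (1 - x))"
    unfolding disk_primitive_def
  proof
    fix x :: complex
    assume x: "x \<in> ball 0 1"
    then have "1 - x \<noteq> 0"
      by (auto simp: dist_norm)
    then show "((\<lambda>w. w * g w) has_field_derivative Cop_inverse g x / (1 - x)) (at x)"
      using zg[OF x] x by (simp add: Cop_inverse_def DERIV_imp_deriv)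
  qed
  moreover have "Cop_inverse g 0 = g 0"
    using zg[of 0] by (simp add: Cop_inverse_def DERIV_imp_deriv)
  ultimately show ?thesis
    using assms by (auto simp: fun_eq_iff Cop_eq_difference_quotient OD_def)
qed

theorem mainTheorem3:
  shows "(\<forall>f\<in>OD. \<forall>g\<in>OD. Cop (\<lambda>z. f z + g z) = (\<lambda>z. Cop f z + Cop g z))
       \<and> (\<forall>f\<in>OD. \<forall>c::complex. Cop (\<lambda>z. c * f z) = (\<lambda>z. c * Cop f z))
       \<and> bij_betw Cop OD OD"
proof (intro conjI ballI allI)
  show "Cop (\<lambda>z. f z + g z) = (\<lambda>z. Cop f z + Cop g z)" if "f \<in> OD" "g \<in> OD" for f g
    using that Cop_add by (simp add: OD_def)
  show "Cop (\<lambda>z. c * f z) = (\<lambda>z. c * Cop f z)" if "f \<in> OD" for f and c :: complex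
    using that Cop_cmult by (simp add: OD_def)
  show "bij_betw Cop OD OD"
    by (rule bij_betw_byWitness[where f' = Cop_inverse])
       (auto simp: Cop_inverse_Cop Cop_Cop_inverse Cop_OD Cop_inverse_OD)
qed

end
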